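(* Let $\alpha\ge1$ and let $\beta$ be an odd positive integer, and let ${\cal C}\subseteq\mathbb{Z}_2^\alpha\times\mathbb{Z}_4^\beta$ be a separable $\mathbb{Z}_2\mathbb{Z}_4$-additive code. Then ${\cal C}$ is cyclic if and only if ${\cal C}_X$ is a binary cyclic code and ${\cal C}_Y$ is a cyclic code over $\mathbb{Z}_4$. Moreover, in this case, in polynomial representation ${\cal C}=\langle (b\mid 0),(0\mid fh+2f)\rangle$ for some $b\in\mathbb{Z}_2[x]$ dividing $x^\alpha-1$ and $f,h,g\in\mathbb{Z}_4[x]$ with $fhg=x^\beta-1$.
   Context: A $\mathbb{Z}_2\mathbb{Z}_4$-additive code is a subgroup ${\cal C}$ of $\mathbb{Z}_2^\alpha\times\mathbb{Z}_4^\beta$; vectors are written ${\bf u}=(u\mid u')$ with $u\in\mathbb{Z}_2^\alpha$, $u'\in\mathbb{Z}_4^\beta$. ${\cal C}_X$ (resp. ${\cal C}_Y$) is the projection of ${\cal C}$ onto the first $\alpha$ (resp. last $\beta$) coordinates. ${\cal C}$ is separable if ${\cal C}={\cal C}_X\times{\cal C}_Y$. ${\cal C}$ is cyclic if $\pi({\cal C})={\cal C}$, where $\pi(u_0,\dots,u_{\alpha-1}\mid u'_0,\dots,u'_{\beta-1})=(u_{\alpha-1},u_0,\dots,u_{\alpha-2}\mid u'_{\beta-1},u'_0,\dots,u'_{\beta-2})$. Vectors are identified with elements of $R_{\alpha,\beta}=\mathbb{Z}_2[x]/(x^\alpha-1)\times\mathbb{Z}_4[x]/(x^\beta-1)$ via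 $(u\mid u')\mapsto(\sum u_ix^i\mid\sum u'_ix^i)$; $R_{\alpha,\beta}$ is a $\mathbb{Z}_4[x]$-module via $p\star(b\mid a)=(\tilde pb\mid pa)$, $\tilde p$ the reduction of $p$ mod 2, and $\langle\cdot\rangle$ denotes the generated submodule. *)

theory Defs
  imports "HOL-Library.Numeral_Type" "HOL-Computational_Algebra.Polynomial"
begin

text \<open>Z2 is the numeral type 2, Z4 the numeral type 4. A vector of
  Z2^alpha x Z4^beta is a pair (u, v) of lists with length u = alpha, length v = beta.\<close>

type_synonym z2z4vec = "2 list \<times> 4 list"

definition ambient :: "nat \<Rightarrow> nat \<Rightarrow> z2z4vec set" where
  "ambient \<alpha> \<beta> = {(u, v). length u = \<alpha> \<and> length v = \<beta>}"

definition vadd :: "z2z4vec \<Rightarrow> z2z4vec \<Rightarrow> z2z4vec" where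
  "vadd x y = (map2 (+) (fst x) (fst y), map2 (+) (snd x) (snd y))"

definition vneg :: "z2z4vec \<Rightarrow> z2z4vec" where
  "vneg x = (map uminus (fst x), map uminus (snd x))"

definition vzero :: "nat \<Rightarrow> nat \<Rightarrow> z2z4vec" where
  "vzero \<alpha> \<beta> = (replicate \<alpha> 0, replicate \<beta> 0)"

definition additive_code :: "nat \<Rightarrow> nat \<Rightarrow> z2z4vec set \<Rightarrow> bool" where
  "additive_code \<alpha> \<beta> C \<longleftrightarrow> C \<subseteq> ambient \<alpha> \<beta> \<and> vzero \<alpha> \<beta> \<in> C \<and>
     (\<forall>x\<in>C. \<forall>y\<in>C. vadd x y \<in> C) \<and> (\<forall>x\<in>C. vneg x \<in> C)"

definition CX :: "z2z4vec set \<Rightarrow> 2 list set" where "CX C = fst ` C"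
definition CY :: "z2z4vec set \<Rightarrow> 4 list set" where "CY C = snd ` C"

definition separable :: "z2z4vec set \<Rightarrow> bool" where
  "separable C \<longleftrightarrow> C = CX C \<times> CY C"

definition shift :: "'a list \<Rightarrow> 'a list" where
  "shift xs = (if xs = [] then [] else last xs # butlast xs)"

definition pi_shift :: "z2z4vec \<Rightarrow> z2z4vec" where
  "pi_shift x = (shift (fst x), shift (snd x))"

definition cyclic_code :: "nat \<Rightarrow> nat \<Rightarrow> z2z4vec set \<Rightarrow> bool" where
  "cyclic_code \<alpha> \<beta> C \<longleftrightarrow> additive_code \<alpha> \<beta> C \<and> pi_shift ` C = C"

definition lin_cyclic :: "nat \<Rightarrow> 'a::comm_ring_1 list set \<Rightarrow> bool" where
  "lin_cyclic n D \<longleftrightarrow> (\<forall>u\<in>D. length u = n) \<and> replicate n 0 \<in> D \<and>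
     (\<forall>u\<in>D. \<forall>v\<in>D. map2 (+) u v \<in> D) \<and> (\<forall>u\<in>D. map uminus u \<in> D) \<and>
     shift ` D = D"

text \<open>Polynomial representation: the vector of length n corresponding to the
  class of p in R[x]/(x^n - 1).\<close>
definition cyc_red :: "nat \<Rightarrow> 'a::comm_ring_1 poly \<Rightarrow> 'a list" where
  "cyc_red n p = map (\<lambda>i. \<Sum>j\<in>{j. j \<le> degree p \<and> j mod n = i}. coeff p j) [0..<n]"

definition red2 :: "4 \<Rightarrow> 2" where "red2 z = of_int (Rep_bit0 z)"

text \<open>Z4[x]-module action on R_{alpha,beta}: p * (b | a) = (p~ b | p a).\<close>
definition star :: "nat \<Rightarrow> nat \<Rightarrow> 4 poly \<Rightarrow> z2z4vec \<Rightarrow> z2z4vec" where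
  "star \<alpha> \<beta> p x = (cyc_red \<alpha> (map_poly red2 p * Poly (fst x)), cyc_red \<beta> (p * Poly (snd x)))"

definition gen2 :: "nat \<Rightarrow> nat \<Rightarrow> z2z4vec \<Rightarrow> z2z4vec \<Rightarrow> z2z4vec set" where
  "gen2 \<alpha> \<beta> g1 g2 = {vadd (star \<alpha> \<beta> p g1) (star \<alpha> \<beta> q g2) | p q. True}"

end

theory Submission
  imports Defs "HOL-Library.Z2"
begin

text \<open>Since the shift is componentwise, a separable code \<open>C\<^sub>X \<times> C\<^sub>Y\<close> is cyclic exactly when
  both projections are. A cyclic code of length \<open>n\<close> over \<open>\<int>\<^sub>2\<close> or \<open>\<int>\<^sub>4\<close> is the image of an
  ideal of \<open>R[x]\<close> containing \<open>x\<^sup>n - 1\<close>. Over \<open>\<int>\<^sub>2\<close> a nonzero element of least degree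
  generates the ideal. Over \<open>\<int>\<^sub>4\<close> one reduces modulo 2: the residue ideal is generated by
  some \<open>t u\<close> and the torsion ideal by \<open>t\<close>, with \<open>t u s = x\<^sup>n - 1\<close>. For odd \<open>n\<close> the
  polynomial \<open>x\<^sup>n - 1\<close> is squarefree over \<open>\<int>\<^sub>2\<close>, so \<open>t, u, s\<close> are pairwise coprime and
  Hensel-lift to \<open>f h g = x\<^sup>n - 1\<close> over \<open>\<int>\<^sub>4\<close>. Then \<open>f h\<close> and \<open>2 f\<close> lie in the ideal, and
  coprimality of \<open>h\<close> and \<open>g\<close> modulo 2 shows \<open>2 f \<equiv> Q (f h + 2 f)\<close>, so \<open>f h + 2 f\<close> generates.\<close>

section \<open>Reduction modulo \<open>x\<^sup>n - 1\<close>\<close>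

abbreviation xn_minus_1 :: "nat \<Rightarrow> 'a::comm_ring_1 poly" where
  "xn_minus_1 n \<equiv> [:0, 1:] ^ n - 1"

lemma length_cyc_red [simp]: "length (cyc_red n p) = n"
  by (simp add: cyc_red_def)

lemma nth_cyc_red:
  "i < n \<Longrightarrow> cyc_red n p ! i = (\<Sum>j\<in>{j. j \<le> degree p \<and> j mod n = i}. coeff p j)"
  by (simp add: cyc_red_def)

lemma xn_minus_1_dvd_power: "xn_minus_1 n dvd ([:0, 1:] ^ (n * k) - (1::'a::comm_ring_1 poly))"
  using power_diff_1_eq[of "[:0, 1:] ^ n :: 'a poly" k] by (simp add: power_mult)

lemma Poly_eq_sum_monom: "Poly xs = (\<Sum>i<length xs. monom (xs ! i) i)"
  by (rule poly_eqI) (auto simp: coeff_sum coeff_monom nth_default_def)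

lemma Poly_cyc_red: "n \<ge> 1 \<Longrightarrow> Poly (cyc_red n p) = (\<Sum>j\<le>degree p. monom (coeff p j) (j mod n))"
proof -
  assume "n \<ge> 1"
  have "Poly (cyc_red n p) = (\<Sum>i<n. \<Sum>j\<in>{j\<in>{..degree p}. j mod n = i}. monom (coeff p j) (j mod n))"
    by (auto simp: Poly_eq_sum_monom nth_cyc_red monom_sum intro!: sum.cong)
  also have "\<dots> = (\<Sum>j\<le>degree p. monom (coeff p j) (j mod n))"
    by (rule sum.group) (use \<open>n \<ge> 1\<close> in auto)
  finally show ?thesis .
qed

lemma xn_minus_1_dvd_monom_diff:
  "xn_minus_1 n dvd (monom c j - monom c (j mod n) :: 'a::comm_ring_1 poly)"
proof -
  have "[:0, 1:] ^ j = ([:0, 1:] ^ (j mod n) * [:0, 1:] ^ (n * (j div n)) :: 'a poly)"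
    by (metis mod_mult_div_eq power_add)
  then have "monom c j - monom c (j mod n) =
      smult c ([:0, 1:] ^ (j mod n) * ([:0, 1:] ^ (n * (j div n)) - 1))"
    by (simp add: monom_altdef algebra_simps smult_diff_right)
  then show ?thesis
    by (metis dvd_mult dvd_smult xn_minus_1_dvd_power)
qed

lemma xn_minus_1_dvd_diff_Poly_cyc_red:
  assumes "n \<ge> 1"
  shows "xn_minus_1 n dvd (p - Poly (cyc_red n (p::'a::comm_ring_1 poly)))"
proof -
  have "p - Poly (cyc_red n p) = (\<Sum>j\<le>degree p. monom (coeff p j) j - monom (coeff p j) (j mod n))"
    by (simp add: Poly_cyc_red[OF assms] sum_subtractf poly_as_sum_of_monoms)
  then show ?thesis
    by (simp add: dvd_sum xn_minus_1_dvd_monom_diff)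
qed

lemma degree_Poly_less: "xs \<noteq> [] \<Longrightarrow> degree (Poly xs) < length xs"
proof -
  assume "xs \<noteq> []"
  have "degree (Poly xs) \<le> length xs - 1"
    by (rule degree_le) (auto simp: nth_default_def)
  with \<open>xs \<noteq> []\<close> show ?thesis by (cases xs) auto
qed

lemma xn_minus_1_dvd_small_degree:
  assumes "n \<ge> 1" "xn_minus_1 n dvd (d::'a::comm_ring_1 poly)" "degree d < n"
  shows "d = 0"
proof (rule ccontr)
  assume "d \<noteq> 0"
  from assms(2) obtain q where q: "d = xn_minus_1 n * q" by (elim dvdE)
  with \<open>d \<noteq> 0\<close> have "q \<noteq> 0" by auto
  have "d = monom 1 n * q - q" by (simp add: q algebra_simps monom_altdef)
  then have "coeff d (n + degree q) = lead_coeff q"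
    using assms(1) by (simp add: coeff_monom_mult coeff_eq_0)
  with \<open>q \<noteq> 0\<close> have "n + degree q \<le> degree d" by (simp add: le_degree)
  with assms(3) show False by simp
qed

lemma Poly_eq_imp_eq: "length u = length v \<Longrightarrow> Poly u = Poly v \<Longrightarrow> u = v"
  by (metis coeff_Poly_eq nth_default_nth nth_equalityI)

lemma xn_minus_1_dvd_Poly_diff_imp_eq:
  assumes "n \<ge> 1" "length u = n" "length v = n"
    and "xn_minus_1 n dvd (Poly u - Poly (v::'a::comm_ring_1 list))"
  shows "u = v"
proof -
  have "u \<noteq> []" "v \<noteq> []" using assms(1-3) by auto
  then have "degree (Poly u - Poly v) < n"
    using degree_Poly_less[of u] degree_Poly_less[of v] assms(2,3)
    by (metis degree_diff_le_max max_less_iff_conj order.strict_trans1)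
  then have "Poly u - Poly v = 0" by (rule xn_minus_1_dvd_small_degree[OF assms(1,4)])
  with assms(2,3) show ?thesis by (simp add: Poly_eq_imp_eq)
qed

lemma cyc_red_eq_iff:
  assumes "n \<ge> 1"
  shows "cyc_red n p = cyc_red n q \<longleftrightarrow> xn_minus_1 n dvd (p - (q::'a::comm_ring_1 poly))"
proof -
  have "p - q = (p - Poly (cyc_red n p)) - (q - Poly (cyc_red n q))
      + (Poly (cyc_red n p) - Poly (cyc_red n q))"
    by simp
  then have "xn_minus_1 n dvd (p - q) \<longleftrightarrow>
      xn_minus_1 n dvd (Poly (cyc_red n p) - Poly (cyc_red n q))"
    using xn_minus_1_dvd_diff_Poly_cyc_red[OF assms, of p]
      xn_minus_1_dvd_diff_Poly_cyc_red[OF assms, of q]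
    by (metis dvd_add_right_iff dvd_diff)
  then show ?thesis
    using xn_minus_1_dvd_Poly_diff_imp_eq[OF assms, of "cyc_red n p" "cyc_red n q"] by auto
qed

lemma cyc_red_Poly:
  assumes "n \<ge> 1" "length u = n"
  shows "cyc_red n (Poly u) = (u::'a::comm_ring_1 list)"
proof (rule xn_minus_1_dvd_Poly_diff_imp_eq[OF assms(1) _ assms(2)])
  show "xn_minus_1 n dvd Poly (cyc_red n (Poly u)) - Poly u"
    using xn_minus_1_dvd_diff_Poly_cyc_red[OF assms(1), of "Poly u"] by (metis dvd_minus_iff minus_diff_eq)
qed simp

lemma cyc_red_eqI:
  assumes "n \<ge> 1" "length w = n" "xn_minus_1 n dvd (p - Poly (w::'a::comm_ring_1 list))"
  shows "cyc_red n p = w"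
  using assms cyc_red_eq_iff[OF assms(1), of p "Poly w"] by (simp add: cyc_red_Poly)

lemma Poly_map2_plus: "length u = length v \<Longrightarrow> Poly (map2 (+) u v) = Poly u + Poly (v::'a::comm_ring_1 list)"
  by (rule poly_eqI) (auto simp: nth_default_def)

lemma length_shift [simp]: "length (shift xs) = length xs"
  by (cases xs rule: rev_cases) (auto simp: shift_def)

lemma Poly_shift:
  "u \<noteq> [] \<Longrightarrow> [:0, 1:] * Poly u - Poly (shift u) = smult (last u) (xn_minus_1 (length u) :: 'a::comm_ring_1 poly)"
proof -
  assume "u \<noteq> []"
  then obtain v a where u: "u = v @ [a]" by (cases u rule: rev_cases) auto
  have "[:0, 1:] * Poly u = [:0, 1:] * Poly v + smult a ([:0, 1:] ^ length u)"
    by (simp add: u Poly_append monom_altdef algebra_simps)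
  moreover have "Poly (shift u) = [:a:] + [:0, 1:] * Poly v"
    by (simp add: u shift_def)
  ultimately show ?thesis by (simp add: u algebra_simps smult_diff_right)
qed

context
  fixes n :: nat
  assumes n: "n \<ge> 1"
begin

lemma cyc_red_add: "cyc_red n (p + q) = map2 (+) (cyc_red n p) (cyc_red n (q::'a::comm_ring_1 poly))"
proof (rule cyc_red_eqI[OF n])
  have "p + q - Poly (map2 (+) (cyc_red n p) (cyc_red n q)) =
      (p - Poly (cyc_red n p)) + (q - Poly (cyc_red n q))"
    by (simp add: Poly_map2_plus)
  then show "xn_minus_1 n dvd p + q - Poly (map2 (+) (cyc_red n p) (cyc_red n q))"
    using xn_minus_1_dvd_diff_Poly_cyc_red[OF n] by (metis dvd_add)
qed simp

lemma cyc_red_monom_x: "cyc_red n ([:0, 1:] * p) = shift (cyc_red n (p::'a::comm_ring_1 poly))"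
proof (rule cyc_red_eqI[OF n])
  let ?u = "cyc_red n p"
  have "?u \<noteq> []" using n length_cyc_red[of n p] by (metis list.size(3) not_one_le_zero)
  then have "[:0, 1:] * p - Poly (shift ?u) = [:0, 1:] * (p - Poly ?u) + smult (last ?u) (xn_minus_1 n)"
    using Poly_shift[of ?u] by (simp add: algebra_simps)
  then show "xn_minus_1 n dvd [:0, 1:] * p - Poly (shift ?u)"
    using xn_minus_1_dvd_diff_Poly_cyc_red[OF n, of p] by (metis dvd_add dvd_mult dvd_refl dvd_smult)
qed simp

lemma cyc_red_0: "cyc_red n (0::'a::comm_ring_1 poly) = replicate n 0"
  using cyc_red_Poly[OF n, of "replicate n (0::'a)"] by simp

lemma cyc_red_eq_0_iff: "cyc_red n p = replicate n 0 \<longleftrightarrow> xn_minus_1 n dvd (p::'a::comm_ring_1 poly)"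
  using cyc_red_eq_iff[OF n, of p 0] by (simp add: cyc_red_0)

lemma cyc_red_mult_Poly_cyc_red:
  "cyc_red n (q * Poly (cyc_red n p)) = cyc_red n (q * (p::'a::comm_ring_1 poly))"
proof -
  have "xn_minus_1 n dvd q * (Poly (cyc_red n p) - p)"
    using xn_minus_1_dvd_diff_Poly_cyc_red[OF n, of p] by (metis dvd_minus_iff dvd_mult minus_diff_eq)
  then show ?thesis by (simp add: cyc_red_eq_iff[OF n] right_diff_distrib)
qed

end

section \<open>Ideals and cyclic codes\<close>

definition is_ideal :: "'a::comm_ring_1 set \<Rightarrow> bool" where
  "is_ideal J \<longleftrightarrow> 0 \<in> J \<and> (\<forall>x\<in>J. \<forall>y\<in>J. x + y \<in> J) \<and> (\<forall>x\<in>J. \<forall>q. q * x \<in> J)"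

lemma is_idealI:
  "0 \<in> J \<Longrightarrow> (\<And>x y. x \<in> J \<Longrightarrow> y \<in> J \<Longrightarrow> x + y \<in> J) \<Longrightarrow> (\<And>x q. x \<in> J \<Longrightarrow> q * x \<in> J)
    \<Longrightarrow> is_ideal J"
  by (simp add: is_ideal_def)

lemma
  assumes "is_ideal J"
  shows ideal_zero: "0 \<in> J"
    and ideal_add: "x \<in> J \<Longrightarrow> y \<in> J \<Longrightarrow> x + y \<in> J"
    and ideal_mult_left: "x \<in> J \<Longrightarrow> q * x \<in> J"
    and ideal_mult_right: "x \<in> J \<Longrightarrow> x * q \<in> J"
    and ideal_diff: "x \<in> J \<Longrightarrow> y \<in> J \<Longrightarrow> x - y \<in> J"
  using assms unfolding is_ideal_def by (auto simp: mult.commute, metis diff_conv_add_uminus mult_minus1)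

lemma bit0_eq_of_nat: "\<exists>k. (c::'a::finite bit0) = of_nat k"
proof (cases c rule: bit0_cases)
  case (of_int z)
  then show ?thesis by (metis of_int_of_nat_eq nonneg_int_cases)
qed

lemma
  fixes D :: "'a::finite bit0 list set"
  assumes n: "n \<ge> 1" and D: "lin_cyclic n D"
  shows lin_cyclic_ideal: "is_ideal {p. cyc_red n p \<in> D}"
    and lin_cyclic_xn_minus_1: "cyc_red n (xn_minus_1 n) \<in> D"
proof -
  have zero: "cyc_red n 0 \<in> D" using D n by (simp add: lin_cyclic_def cyc_red_0)
  have add: "cyc_red n (p + q) \<in> D" if "cyc_red n p \<in> D" "cyc_red n q \<in> D" for p q
    using that D n by (simp add: lin_cyclic_def cyc_red_add)
  have x: "cyc_red n ([:0, 1:] * p) \<in> D" if "cyc_red n p \<in> D" for p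
    using that D cyc_red_monom_x[OF n, of p] by (auto simp: lin_cyclic_def)
  have smult: "cyc_red n (smult (of_nat k) p) \<in> D" if "cyc_red n p \<in> D" for p k
    by (induction k) (simp_all add: zero smult_add_left add[OF that])
  have "cyc_red n (q * p) \<in> D" if "cyc_red n p \<in> D" for p q
  proof (induction q rule: pCons_induct)
    case (pCons c q)
    obtain k where "c = of_nat k" using bit0_eq_of_nat by blast
    moreover have "pCons c q * p = smult c p + [:0, 1:] * (q * p)" by simp
    ultimately show ?case using add[OF smult[OF that] x[OF pCons(2)]] by simp
  qed (simp add: zero)
  then show "is_ideal {p. cyc_red n p \<in> D}" using zero add by (auto intro: is_idealI)
  show "cyc_red n (xn_minus_1 n) \<in> D"
    using D cyc_red_eq_0_iff[OF n] by (metis dvd_refl lin_cyclic_def)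
qed

lemma lin_cyclic_generated_by:
  fixes D :: "'a::finite bit0 list set"
  assumes n: "n \<ge> 1" and D: "lin_cyclic n D" and a: "cyc_red n a \<in> D"
    and gen: "\<And>c. cyc_red n c \<in> D \<Longrightarrow> \<exists>q. xn_minus_1 n dvd c - q * a"
  shows "D = {cyc_red n (q * a) | q. True}"
proof
  show "{cyc_red n (q * a) | q. True} \<subseteq> D"
    using ideal_mult_left[OF lin_cyclic_ideal[OF n D]] a by auto
  show "D \<subseteq> {cyc_red n (q * a) | q. True}"
  proof
    fix u assume "u \<in> D"
    then have u: "u = cyc_red n (Poly u)"
      using D n by (simp add: lin_cyclic_def cyc_red_Poly)
    with \<open>u \<in> D\<close> obtain q where "xn_minus_1 n dvd Poly u - q * a" using gen[of "Poly u"] by auto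
    then show "u \<in> {cyc_red n (q * a) | q. True}"
      using u cyc_red_eq_iff[OF n, of "Poly u" "q * a"] by auto
  qed
qed

section \<open>Binary cyclic codes\<close>

lemma xn_minus_1_squarefree:
  fixes d :: "'a::field poly"
  assumes n: "of_nat n \<noteq> (0::'a)" and dvd: "d * d dvd xn_minus_1 n"
  shows "d dvd 1"
proof -
  obtain k where k: "xn_minus_1 n = d * d * k" using dvd by (elim dvdE)
  have "d dvd pderiv (d * d * k)"
    unfolding pderiv_mult by (intro dvd_add dvd_mult dvd_mult2 dvd_refl)
  moreover have "pderiv (xn_minus_1 n :: 'a poly) = smult (of_nat n) ([:0, 1:] ^ (n - 1))"
    unfolding pderiv_diff pderiv_power by (simp add: pderiv_pCons)
  ultimately have "d dvd smult (of_nat n) ([:0, 1:] ^ (n - 1))"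
    by (simp add: k)
  then have "d dvd [:0, 1:] ^ (n - 1)"
    using n by (simp add: dvd_smult_iff)
  moreover have "n \<noteq> 0" using n by (metis of_nat_0)
  ultimately have "d dvd [:0, 1:] ^ n"
    by (metis dvd_mult power_eq_if)
  moreover have "d dvd xn_minus_1 n" using dvd dvd_mult_left by blast
  ultimately have "d dvd [:0, 1:] ^ n - xn_minus_1 n" by (rule dvd_diff)
  then show ?thesis by simp
qed

locale ring_hom_fun =
  fixes f :: "'a::comm_ring_1 \<Rightarrow> 'b::comm_ring_1"
  assumes hom_add: "f (a + b) = f a + f b"
    and hom_mult: "f (a * b) = f a * f b"
    and hom_one: "f 1 = 1"
begin

lemma hom_zero: "f 0 = 0"
  using hom_add[of 0 0] by simp

lemma hom_uminus: "f (- a) = - f a"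
  using hom_add[of a "- a"] by (simp add: hom_zero add_eq_0_iff)

lemma map_poly_add: "map_poly f (p + q) = map_poly f p + map_poly f q"
  by (rule poly_eqI) (simp add: coeff_map_poly hom_zero hom_add)

lemma map_poly_diff: "map_poly f (p - q) = map_poly f p - map_poly f q"
proof -
  have "map_poly f (- q) = - map_poly f q"
    by (rule poly_eqI) (simp add: coeff_map_poly hom_zero hom_uminus)
  then show ?thesis by (metis diff_conv_add_uminus map_poly_add)
qed

lemma map_poly_mult: "map_poly f (p * q) = map_poly f p * map_poly f q"
proof (induction p rule: pCons_induct)
  case (pCons a p)
  have "map_poly f (pCons a p * q) = smult (f a) (map_poly f q) + pCons 0 (map_poly f (p * q))"
    by (simp add: map_poly_add map_poly_smult map_poly_pCons hom_zero hom_mult)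
  then show ?case
    by (simp add: pCons.IH map_poly_pCons hom_zero)
qed (simp add: hom_zero)

lemma map_poly_dvd: "p dvd q \<Longrightarrow> map_poly f p dvd map_poly f q"
  by (metis dvdE dvd_triv_left map_poly_mult)

lemma map_poly_xn_minus_1: "map_poly f (xn_minus_1 n) = xn_minus_1 n"
proof -
  have "map_poly f ([:0, 1:] ^ k) = [:0, 1:] ^ k" for k
    by (induction k) (simp_all add: map_poly_mult map_poly_pCons hom_zero hom_one)
  then show ?thesis by (simp add: map_poly_diff hom_one)
qed

end

lemma Z2_cases: "(z::2) = 0 \<or> z = 1"
proof (cases z rule: bit0_cases)
  case (of_int k)
  then have "k = 0 \<or> k = 1" by auto
  then show ?thesis using of_int by auto
qed

text \<open>The numeral type \<open>2\<close> is not an instance of \<open>field\<close>, so squarefreeness of \<open>x\<^sup>n - 1\<close>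
  is proved in the isomorphic field \<open>bit\<close> and transported back.\<close>

definition bit_of_Z2 :: "2 \<Rightarrow> bit" where "bit_of_Z2 z = (if z = 0 then 0 else 1)"
definition Z2_of_bit :: "bit \<Rightarrow> 2" where "Z2_of_bit z = (if z = 0 then 0 else 1)"

interpretation bit_of_Z2: ring_hom_fun bit_of_Z2
proof
  fix a b :: 2
  show "bit_of_Z2 (a + b) = bit_of_Z2 a + bit_of_Z2 b" "bit_of_Z2 (a * b) = bit_of_Z2 a * bit_of_Z2 b"
    using Z2_cases[of a] Z2_cases[of b] by (auto simp: bit_of_Z2_def)
qed (simp add: bit_of_Z2_def)

interpretation Z2_of_bit: ring_hom_fun Z2_of_bit
  by standard (auto simp: Z2_of_bit_def)

lemma Z2_of_bit_bit_of_Z2: "map_poly Z2_of_bit (map_poly bit_of_Z2 p) = p"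
proof -
  have "Z2_of_bit \<circ> bit_of_Z2 = id"
    by (rule ext) (use Z2_cases in \<open>auto simp: Z2_of_bit_def bit_of_Z2_def\<close>)
  then show ?thesis by (simp add: map_poly_map_poly Z2_of_bit_def bit_of_Z2_def)
qed

lemma Z2_poly_squarefree_xn_minus_1:
  fixes d :: "2 poly"
  assumes "odd n" and "d * d dvd xn_minus_1 n"
  shows "d dvd 1"
proof -
  have "of_nat n \<noteq> (0::bit)"
    using \<open>odd n\<close> by (metis even_of_nat_iff even_zero)
  moreover have "map_poly bit_of_Z2 d * map_poly bit_of_Z2 d dvd xn_minus_1 n"
    using bit_of_Z2.map_poly_dvd[OF assms(2)] by (simp add: bit_of_Z2.map_poly_mult bit_of_Z2.map_poly_xn_minus_1)
  ultimately have "map_poly bit_of_Z2 d dvd 1" by (rule xn_minus_1_squarefree)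
  then show ?thesis
    using Z2_of_bit.map_poly_dvd by (metis Z2_of_bit_bit_of_Z2 Z2_of_bit.hom_one map_poly_1')
qed

lemma Z2_poly_ideal_principal:
  assumes J: "is_ideal (J :: 2 poly set)"
  shows "\<exists>d\<in>J. \<forall>z\<in>J. d dvd z"
proof (cases "J \<subseteq> {0}")
  case True
  then show ?thesis using ideal_zero[OF J] by auto
next
  case False
  then obtain d where d: "d \<in> J" "d \<noteq> 0"
    and min: "\<And>y. y \<in> J \<Longrightarrow> y \<noteq> 0 \<Longrightarrow> degree d \<le> degree y"
    using ex_has_least_nat[of "\<lambda>y. y \<in> J \<and> y \<noteq> 0" _ degree] by blast
  have lc: "lead_coeff d = 1" using Z2_cases[of "lead_coeff d"] d(2) by auto
  show ?thesis
  proof (intro bexI[OF _ d(1)] ballI)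
    fix z assume "z \<in> J"
    obtain q r where qr: "pseudo_divmod z d = (q, r)" by fastforce
    note pd = pseudo_divmod[OF d(2) qr]
    have zq: "z = d * q + r" using pd(1) lc by simp
    then have "r = z - d * q" by simp
    then have "r \<in> J" using ideal_diff[OF J \<open>z \<in> J\<close> ideal_mult_right[OF J d(1)]] by simp
    have "r = 0"
      using pd(2) min[OF \<open>r \<in> J\<close>] by fastforce
    then show "d dvd z" using zq by simp
  qed
qed

lemma Z2_poly_bezout_factors_xn_minus_1:
  fixes A B :: "2 poly"
  assumes "odd n" and "A * B dvd xn_minus_1 n"
  shows "\<exists>U V. U * A + V * B = 1"
proof -
  let ?J = "{U * A + V * B | U V. True}"
  have J: "is_ideal ?J"
  proof (rule is_idealI)
    show "0 \<in> ?J" by (intro CollectI exI[of _ 0]) simp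
    show "x + y \<in> ?J" if "x \<in> ?J" "y \<in> ?J" for x y
    proof -
      from that obtain U V U' V' where "x = U * A + V * B" "y = U' * A + V' * B" by blast
      then have "x + y = (U + U') * A + (V + V') * B" by (simp add: algebra_simps)
      then show ?thesis by blast
    qed
    show "q * x \<in> ?J" if "x \<in> ?J" for x q
    proof -
      from that obtain U V where "x = U * A + V * B" by blast
      then have "q * x = (q * U) * A + (q * V) * B" by (simp add: algebra_simps)
      then show ?thesis by blast
    qed
  qed
  obtain d where d: "d \<in> ?J" "\<forall>z\<in>?J. d dvd z" using Z2_poly_ideal_principal[OF J] by blast
  have "A \<in> ?J" by (intro CollectI exI[of _ 1] exI[of _ 0]) simp
  moreover have "B \<in> ?J" by (intro CollectI exI[of _ 0] exI[of _ 1]) simp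
  ultimately have "d * d dvd xn_minus_1 n"
    using d(2) assms(2) by (meson dvd_trans mult_dvd_mono)
  then have "d dvd 1" by (rule Z2_poly_squarefree_xn_minus_1[OF assms(1)])
  then obtain e where "1 = d * e" by (elim dvdE)
  then have "1 \<in> ?J" using ideal_mult_right[OF J d(1), of e] by simp
  then show ?thesis by auto
qed

lemma lin_cyclic_Z2_generator:
  fixes D :: "2 list set"
  assumes n: "n \<ge> 1" and D: "lin_cyclic n D"
  shows "\<exists>b. b dvd xn_minus_1 n \<and> D = {cyc_red n (q * b) | q. True}"
proof -
  obtain b where b: "cyc_red n b \<in> D" and gen: "\<And>c. cyc_red n c \<in> D \<Longrightarrow> b dvd c"
    using Z2_poly_ideal_principal[OF lin_cyclic_ideal[OF n D]] by auto
  have "b dvd xn_minus_1 n" using gen[OF lin_cyclic_xn_minus_1[OF n D]] .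
  moreover have "D = {cyc_red n (q * b) | q. True}"
    using gen by (intro lin_cyclic_generated_by[OF n D b]) (metis dvdE mult.commute diff_self dvd_0_right)
  ultimately show ?thesis by blast
qed

section \<open>Cyclic codes over \<open>\<int>\<^sub>4\<close> of odd length\<close>

lemma Z4_cases: "(z::4) = 0 \<or> z = 1 \<or> z = 2 \<or> z = 3"
proof (cases z rule: bit0_cases)
  case (of_int k)
  then have "k = 0 \<or> k = 1 \<or> k = 2 \<or> k = 3" by auto
  then show ?thesis using of_int by auto
qed

lemma red2_numerals: "red2 0 = 0" "red2 1 = 1" "red2 2 = 0" "red2 3 = 1"
  by (simp_all add: red2_def bit0.Rep_0 bit0.Rep_1 bit0.Rep_numeral)

lemma of_int_mod_4_Z2: "(of_int (k mod 4) :: 2) = of_int k"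
  by (simp add: bit0.of_int_eq mod_mod_cancel)

interpretation red2: ring_hom_fun red2
proof
  fix a b :: 4
  have "Rep_bit0 (a + b) = (Rep_bit0 a + Rep_bit0 b) mod 4"
    by (simp add: bit0.add_def bit0.Abs_inverse)
  then show "red2 (a + b) = red2 a + red2 b" by (simp add: red2_def of_int_mod_4_Z2)
  have "Rep_bit0 (a * b) = (Rep_bit0 a * Rep_bit0 b) mod 4"
    by (simp add: bit0.mult_def bit0.Abs_inverse)
  then show "red2 (a * b) = red2 a * red2 b" by (simp add: red2_def of_int_mod_4_Z2)
qed (simp add: red2_numerals)

abbreviation red2_poly :: "4 poly \<Rightarrow> 2 poly" where
  "red2_poly \<equiv> map_poly red2"

definition Z4_of_Z2 :: "2 \<Rightarrow> 4" where "Z4_of_Z2 z = (if z = 0 then 0 else 1)"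

abbreviation lift2_poly :: "2 poly \<Rightarrow> 4 poly" where
  "lift2_poly \<equiv> map_poly Z4_of_Z2"

lemma red2_poly_lift2_poly [simp]: "red2_poly (lift2_poly p) = p"
proof -
  have "red2 \<circ> Z4_of_Z2 = id"
    by (rule ext) (use Z2_cases in \<open>auto simp: Z4_of_Z2_def red2_numerals\<close>)
  then show ?thesis by (simp add: map_poly_map_poly Z4_of_Z2_def red2_numerals)
qed

lemma red2_poly_two [simp]: "red2_poly 2 = 0"
  by (simp add: numeral_poly map_poly_pCons red2.hom_zero red2_numerals)

lemma Z4_poly_four_eq_0: "(4::4 poly) = 0"
  by (simp add: numeral_poly)

lemma red2_poly_eq_imp_ex_two_mult:
  assumes "red2_poly Y = red2_poly Z"
  shows "\<exists>E. Y = Z + 2 * E"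
proof -
  define D where "D = Y - Z"
  have red2_coeff: "red2 (coeff D i) = 0" for i
  proof -
    have "red2_poly D = 0" using assms by (simp add: D_def red2.map_poly_diff)
    then show ?thesis by (metis coeff_0 coeff_map_poly red2.hom_zero)
  qed
  have c: "coeff D i = 0 \<or> coeff D i = 2" for i
    using red2_coeff[of i] Z4_cases[of "coeff D i"] by (auto simp: red2_numerals)
  define E where "E = map_poly (\<lambda>z. if z = 2 then 1 else 0 :: 4) D"
  have "2 * E = D"
    by (rule poly_eqI) (use c in \<open>auto simp: E_def numeral_mult_conv_smult coeff_map_poly\<close>)
  then show ?thesis by (metis D_def add.commute diff_add_cancel)
qed

lemma red2_poly_eq_imp_two_mult_eq:
  assumes "red2_poly Y = red2_poly Z"
  shows "2 * Y = 2 * Z"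
proof -
  obtain E where "Y = Z + 2 * E" using red2_poly_eq_imp_ex_two_mult[OF assms] by blast
  then have "2 * Y = 2 * Z + 4 * E" by (simp add: algebra_simps)
  then show ?thesis by (simp add: Z4_poly_four_eq_0)
qed

lemma Z4_hensel_lift:
  fixes P :: "4 poly" and A B :: "2 poly"
  assumes P: "red2_poly P = A * B" and bezout: "U * A + V * B = 1"
  shows "\<exists>F G. F * G = P \<and> red2_poly F = A \<and> red2_poly G = B"
proof -
  have "red2_poly (lift2_poly A * lift2_poly B) = red2_poly P"
    by (simp add: P red2.map_poly_mult)
  then obtain E where E: "P = lift2_poly A * lift2_poly B + 2 * E"
    using red2_poly_eq_imp_ex_two_mult by metis
  \<comment> \<open>Corrections by \<open>2 W V\<close> and \<open>2 W U\<close> absorb the error \<open>2 E\<close>, as \<open>4 = 0\<close>.\<close>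
  define W where "W = red2_poly E"
  define F where "F = lift2_poly A + 2 * lift2_poly (W * V)"
  define G where "G = lift2_poly B + 2 * lift2_poly (W * U)"
  have "red2_poly (lift2_poly A * lift2_poly (W * U) + lift2_poly B * lift2_poly (W * V)) = W * (U * A + V * B)"
    by (simp add: red2.map_poly_add red2.map_poly_mult algebra_simps)
  also have "\<dots> = red2_poly E" by (simp add: bezout W_def)
  finally have "2 * (lift2_poly A * lift2_poly (W * U) + lift2_poly B * lift2_poly (W * V)) = 2 * E"
    by (rule red2_poly_eq_imp_two_mult_eq)
  moreover have "F * G = lift2_poly A * lift2_poly B
      + 2 * (lift2_poly A * lift2_poly (W * U) + lift2_poly B * lift2_poly (W * V))
      + 4 * (lift2_poly (W * V) * lift2_poly (W * U))"
    by (simp add: F_def G_def algebra_simps)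
  ultimately have "F * G = P" using E by (simp add: Z4_poly_four_eq_0)
  moreover have "red2_poly F = A" "red2_poly G = B"
    by (simp_all add: F_def G_def red2.map_poly_add red2.map_poly_mult)
  ultimately show ?thesis by blast
qed

lemma Z4_hensel_lift_xn_minus_1:
  fixes t u s :: "2 poly"
  assumes n: "odd n" and tus: "xn_minus_1 n = t * u * s"
  shows "\<exists>f h g. f * h * g = xn_minus_1 n \<and> red2_poly f = t \<and> red2_poly h = u \<and> red2_poly g = s"
proof -
  obtain U1 V1 where "U1 * (t * u) + V1 * s = 1"
    using Z2_poly_bezout_factors_xn_minus_1[OF n, of "t * u" s] tus by auto
  moreover have "red2_poly (xn_minus_1 n) = (t * u) * s"
    using tus red2.map_poly_xn_minus_1 by simp
  ultimately obtain F g where Fg: "F * g = xn_minus_1 n" "red2_poly F = t * u" "red2_poly g = s"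
    using Z4_hensel_lift by blast
  obtain U2 V2 where "U2 * t + V2 * u = 1"
    using Z2_poly_bezout_factors_xn_minus_1[OF n, of t u] tus by (metis dvd_triv_left)
  then obtain f h where "f * h = F" "red2_poly f = t" "red2_poly h = u"
    using Z4_hensel_lift[OF Fg(2)] by blast
  then show ?thesis using Fg by blast
qed

text \<open>The residue and torsion codes of the paper, viewed as ideals of \<open>\<int>\<^sub>2[x]\<close>.\<close>

definition residue_ideal :: "4 poly set \<Rightarrow> 2 poly set" where
  "residue_ideal I = red2_poly ` I"

definition torsion_ideal :: "4 poly set \<Rightarrow> 2 poly set" where
  "torsion_ideal I = {red2_poly p | p. 2 * p \<in> I}"

lemma red2_poly_mult_lift2_poly: "q * red2_poly p = red2_poly (lift2_poly q * p)"
  by (simp add: red2.map_poly_mult)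

context
  fixes I :: "4 poly set"
  assumes I: "is_ideal I"
begin

lemma is_ideal_residue_ideal: "is_ideal (residue_ideal I)"
proof (rule is_idealI)
  show "0 \<in> residue_ideal I"
    unfolding residue_ideal_def using ideal_zero[OF I] by force
  show "x + y \<in> residue_ideal I" if "x \<in> residue_ideal I" "y \<in> residue_ideal I" for x y
    using that ideal_add[OF I] unfolding residue_ideal_def by (auto simp flip: red2.map_poly_add)
  show "q * x \<in> residue_ideal I" if "x \<in> residue_ideal I" for x q
    using that ideal_mult_left[OF I] unfolding residue_ideal_def by (auto simp: red2_poly_mult_lift2_poly)
qed

lemma is_ideal_torsion_ideal: "is_ideal (torsion_ideal I)"
proof (rule is_idealI)
  show "0 \<in> torsion_ideal I"
    unfolding torsion_ideal_def using ideal_zero[OF I] by (intro CollectI exI[of _ 0]) simp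
  show "x + y \<in> torsion_ideal I" if "x \<in> torsion_ideal I" "y \<in> torsion_ideal I" for x y
  proof -
    from that obtain p p' where "2 * p \<in> I" "2 * p' \<in> I" "x = red2_poly p" "y = red2_poly p'"
      unfolding torsion_ideal_def by blast
    moreover have "2 * (p + p') = 2 * p + 2 * p'" by (simp add: distrib_left)
    ultimately have "x + y = red2_poly (p + p')" "2 * (p + p') \<in> I"
      by (simp_all add: red2.map_poly_add ideal_add[OF I])
    then show ?thesis unfolding torsion_ideal_def by blast
  qed
  show "q * x \<in> torsion_ideal I" if "x \<in> torsion_ideal I" for x q
  proof -
    from that obtain p where "2 * p \<in> I" "x = red2_poly p"
      unfolding torsion_ideal_def by blast
    moreover have "2 * (lift2_poly q * p) \<in> I"
      using ideal_mult_left[OF I \<open>2 * p \<in> I\<close>, of "lift2_poly q"] by (simp add: mult.left_commute)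
    ultimately have "q * x = red2_poly (lift2_poly q * p)" "2 * (lift2_poly q * p) \<in> I"
      by (simp_all add: red2_poly_mult_lift2_poly)
    then show ?thesis unfolding torsion_ideal_def by blast
  qed
qed

lemma residue_ideal_subset_torsion_ideal: "residue_ideal I \<subseteq> torsion_ideal I"
  unfolding residue_ideal_def torsion_ideal_def using ideal_mult_left[OF I] by blast

end

lemma dvd_if_bezout_dvd_mult:
  fixes a b c :: "'a::comm_ring_1"
  assumes "U * a + V * b = 1" and "a dvd c * b"
  shows "a dvd c"
proof -
  have "c = c * (U * a + V * b)" using assms(1) by simp
  also have "\<dots> = (c * U) * a + V * (c * b)" by (simp add: algebra_simps)
  finally show ?thesis using assms(2) by (metis dvd_add dvd_mult dvd_triv_right)
qed

lemma Z4_ideal_factorization_generators: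
  assumes n: "odd n" and I: "is_ideal I" and XX_mem: "xn_minus_1 n \<in> I"
  shows "\<exists>f h g. f * h * g = xn_minus_1 n \<and>
    red2_poly (f * h) \<in> residue_ideal I \<and> (\<forall>z\<in>residue_ideal I. red2_poly (f * h) dvd z) \<and>
    red2_poly f \<in> torsion_ideal I \<and> (\<forall>z\<in>torsion_ideal I. red2_poly f dvd z)"
proof -
  obtain r where r: "r \<in> residue_ideal I" "\<forall>z\<in>residue_ideal I. r dvd z"
    using Z2_poly_ideal_principal[OF is_ideal_residue_ideal[OF I]] by blast
  obtain t where t: "t \<in> torsion_ideal I" "\<forall>z\<in>torsion_ideal I. t dvd z"
    using Z2_poly_ideal_principal[OF is_ideal_torsion_ideal[OF I]] by blast
  have "t dvd r" using t(2) r(1) residue_ideal_subset_torsion_ideal[OF I] by blast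
  then obtain u where u: "r = t * u" by (elim dvdE)
  have "xn_minus_1 n \<in> residue_ideal I"
    using XX_mem red2.map_poly_xn_minus_1 unfolding residue_ideal_def by (metis image_eqI)
  then have "r dvd xn_minus_1 n" using r(2) by blast
  then obtain s where "xn_minus_1 n = t * u * s" using u by (elim dvdE) simp
  then obtain f h g where "f * h * g = xn_minus_1 n" "red2_poly f = t" "red2_poly h = u" "red2_poly g = s"
    using Z4_hensel_lift_xn_minus_1[OF n] by blast
  then show ?thesis using r t u by (auto simp: red2.map_poly_mult)
qed

context
  fixes n :: nat and I :: "4 poly set" and f h g :: "4 poly"
  assumes n: "odd n" and I: "is_ideal I" and XX_mem: "xn_minus_1 n \<in> I"
    and fhg: "f * h * g = xn_minus_1 n"
    and residue_gen: "red2_poly (f * h) \<in> residue_ideal I" "\<And>z. z \<in> residue_ideal I \<Longrightarrow> red2_poly (f * h) dvd z"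
    and torsion_gen: "red2_poly f \<in> torsion_ideal I" "\<And>z. z \<in> torsion_ideal I \<Longrightarrow> red2_poly f dvd z"
begin

lemma red2_poly_bezout:
  shows "\<exists>U V. U * red2_poly f + V * red2_poly g = 1"
    and "\<exists>U V. U * red2_poly h + V * red2_poly g = 1"
proof -
  have XX: "red2_poly f * red2_poly h * red2_poly g = xn_minus_1 n"
    using arg_cong[OF fhg, of red2_poly] by (simp add: red2.map_poly_mult red2.map_poly_xn_minus_1)
  have "red2_poly f * red2_poly g dvd xn_minus_1 n" "red2_poly h * red2_poly g dvd xn_minus_1 n"
    unfolding XX[symmetric] by (simp_all add: mult_dvd_mono)
  then show "\<exists>U V. U * red2_poly f + V * red2_poly g = 1" "\<exists>U V. U * red2_poly h + V * red2_poly g = 1"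
    using Z2_poly_bezout_factors_xn_minus_1[OF n] by auto
qed

lemma two_f_mem: "2 * f \<in> I"
proof -
  obtain p where "red2_poly p = red2_poly f" "2 * p \<in> I"
    using torsion_gen(1) unfolding torsion_ideal_def by auto
  then show ?thesis using red2_poly_eq_imp_two_mult_eq by metis
qed

lemma two_mult_mem_if_red2_poly_dvd:
  assumes "red2_poly f dvd red2_poly e"
  shows "2 * e \<in> I"
proof -
  obtain m where "red2_poly e = red2_poly (f * lift2_poly m)"
    using assms by (auto elim!: dvdE simp: red2.map_poly_mult)
  then have "2 * e = 2 * (f * lift2_poly m)" by (rule red2_poly_eq_imp_two_mult_eq)
  then have "2 * e = lift2_poly m * (2 * f)" by (simp add: algebra_simps)
  then show ?thesis using ideal_mult_left[OF I two_f_mem] by simp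
qed

lemma f_h_mem: "f * h \<in> I"
proof -
  obtain p where p: "p \<in> I" "red2_poly p = red2_poly (f * h)"
    using residue_gen(1) unfolding residue_ideal_def by auto
  then obtain e where e: "p = f * h + 2 * e" using red2_poly_eq_imp_ex_two_mult by blast
  then have "2 * (e * g) = p * g - xn_minus_1 n" by (simp add: fhg[symmetric] algebra_simps)
  then have "2 * (e * g) \<in> I" using ideal_diff[OF I ideal_mult_right[OF I p(1)] XX_mem] by simp
  then have "red2_poly (e * g) \<in> torsion_ideal I" unfolding torsion_ideal_def by blast
  then have "red2_poly f dvd red2_poly e * red2_poly g"
    using torsion_gen(2) by (simp add: red2.map_poly_mult)
  then have "red2_poly f dvd red2_poly e"
    using red2_poly_bezout(1) dvd_if_bezout_dvd_mult by blast
  then have "2 * e \<in> I" by (rule two_mult_mem_if_red2_poly_dvd)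
  then show ?thesis using ideal_diff[OF I p(1)] e by force
qed

lemma two_f_congruent: "\<exists>Q. xn_minus_1 n dvd 2 * f - Q * (f * h + 2 * f)"
proof -
  obtain U V where "U * red2_poly h + V * red2_poly g = 1" using red2_poly_bezout(2) by blast
  then have "red2_poly (lift2_poly U * h + lift2_poly V * g) = red2_poly 1"
    by (simp add: red2.map_poly_add red2.map_poly_mult red2.hom_one)
  then obtain w where w: "lift2_poly U * h + lift2_poly V * g = 1 + 2 * w"
    using red2_poly_eq_imp_ex_two_mult by blast
  have "2 * f * (1 + 2 * w) = 2 * f + 4 * (f * w)" by (simp add: algebra_simps)
  then have "2 * f = 2 * f * (1 + 2 * w)" by (simp add: Z4_poly_four_eq_0)
  also have "\<dots> = lift2_poly U * (2 * (f * h)) + lift2_poly V * (2 * f * g)"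
    by (simp only: w[symmetric]) (simp add: algebra_simps)
  also have "2 * (f * h) = 2 * (f * h + 2 * f)"
  proof -
    have "2 * (f * h + 2 * f) = 2 * (f * h) + 4 * f" by (simp add: algebra_simps)
    then show ?thesis by (simp add: Z4_poly_four_eq_0)
  qed
  also have "2 * f * g = (f * h + 2 * f) * g - xn_minus_1 n"
    by (simp add: fhg[symmetric] algebra_simps)
  finally have "2 * f - (2 * lift2_poly U + lift2_poly V * g) * (f * h + 2 * f) = xn_minus_1 n * (- lift2_poly V)"
    by (simp add: algebra_simps)
  then show ?thesis by (metis dvd_triv_left)
qed

lemma mem_imp_congruent_generator:
  assumes c: "c \<in> I"
  shows "\<exists>q. xn_minus_1 n dvd c - q * (f * h + 2 * f)"
proof -
  have "red2_poly (f * h) dvd red2_poly c"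
    using residue_gen(2) c unfolding residue_ideal_def by blast
  then obtain k where "red2_poly c = red2_poly (f * h * lift2_poly k)"
    by (auto elim!: dvdE simp: red2.map_poly_mult)
  then obtain e where e: "c = f * h * lift2_poly k + 2 * e"
    using red2_poly_eq_imp_ex_two_mult by blast
  then have "2 * e = c - f * h * lift2_poly k" by simp
  then have "2 * e \<in> I" using ideal_diff[OF I c ideal_mult_right[OF I f_h_mem]] by simp
  then have "red2_poly e \<in> torsion_ideal I" unfolding torsion_ideal_def by blast
  then obtain m where "red2_poly e = red2_poly (f * lift2_poly m)"
    using torsion_gen(2) by (auto elim!: dvdE simp: red2.map_poly_mult)
  then have em: "2 * e = 2 * (f * lift2_poly m)" by (rule red2_poly_eq_imp_two_mult_eq)
  obtain Q where Q: "xn_minus_1 n dvd 2 * f - Q * (f * h + 2 * f)"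
    using two_f_congruent by blast
  have "c - (lift2_poly k + Q * (lift2_poly m - lift2_poly k)) * (f * h + 2 * f) =
      (2 * f - Q * (f * h + 2 * f)) * (lift2_poly m - lift2_poly k)"
    unfolding e em by (simp add: algebra_simps)
  then show ?thesis using Q by (metis dvd_mult2)
qed

end

lemma Z4_poly_ideal_generator:
  fixes I :: "4 poly set"
  assumes n: "odd n" and I: "is_ideal I" and XX_mem: "xn_minus_1 n \<in> I"
  shows "\<exists>f h g. f * h * g = xn_minus_1 n \<and> f * h + 2 * f \<in> I \<and>
    (\<forall>c\<in>I. \<exists>q. xn_minus_1 n dvd c - q * (f * h + 2 * f))"
proof -
  obtain f h g where fhg: "f * h * g = xn_minus_1 n"
    and res: "red2_poly (f * h) \<in> residue_ideal I" "\<And>z. z \<in> residue_ideal I \<Longrightarrow> red2_poly (f * h) dvd z"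
    and tor: "red2_poly f \<in> torsion_ideal I" "\<And>z. z \<in> torsion_ideal I \<Longrightarrow> red2_poly f dvd z"
    using Z4_ideal_factorization_generators[OF assms] by blast
  note generators = n I XX_mem fhg res tor
  have "f * h + 2 * f \<in> I"
    using ideal_add[OF I f_h_mem[OF generators] two_f_mem[OF generators]] .
  then show ?thesis
    using fhg mem_imp_congruent_generator[OF generators] by blast
qed

lemma lin_cyclic_Z4_generator:
  fixes D :: "4 list set"
  assumes n: "odd n" and D: "lin_cyclic n D"
  shows "\<exists>f h g. f * h * g = xn_minus_1 n \<and> D = {cyc_red n (q * (f * h + 2 * f)) | q. True}"
proof -
  have n1: "n \<ge> 1" using n by (cases n) auto
  obtain f h g where "f * h * g = xn_minus_1 n" "cyc_red n (f * h + 2 * f) \<in> D"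
      "\<And>c. cyc_red n c \<in> D \<Longrightarrow> \<exists>q. xn_minus_1 n dvd c - q * (f * h + 2 * f)"
    using Z4_poly_ideal_generator[OF n lin_cyclic_ideal[OF n1 D]] lin_cyclic_xn_minus_1[OF n1 D] by auto
  then show ?thesis using lin_cyclic_generated_by[OF n1 D] by blast
qed

section \<open>Separable \<open>\<int>\<^sub>2\<int>\<^sub>4\<close>-additive codes\<close>

lemma cyclic_code_imp_lin_cyclic:
  assumes "cyclic_code \<alpha> \<beta> C"
  shows "lin_cyclic \<alpha> (CX C) \<and> lin_cyclic \<beta> (CY C)"
proof -
  have sub: "C \<subseteq> ambient \<alpha> \<beta>" and zero: "vzero \<alpha> \<beta> \<in> C"
    and add: "\<And>x y. x \<in> C \<Longrightarrow> y \<in> C \<Longrightarrow> vadd x y \<in> C"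
    and neg: "\<And>x. x \<in> C \<Longrightarrow> vneg x \<in> C"
    and sh: "pi_shift ` C = C"
    using assms by (auto simp: cyclic_code_def additive_code_def)
  have "shift ` CX C = fst ` pi_shift ` C" "shift ` CY C = snd ` pi_shift ` C"
    by (force simp: CX_def CY_def pi_shift_def image_image)+
  then have "shift ` CX C = CX C" "shift ` CY C = CY C"
    using sh by (simp_all add: CX_def CY_def)
  moreover have "\<forall>u\<in>CX C. length u = \<alpha>" "\<forall>u\<in>CY C. length u = \<beta>"
    using sub by (auto simp: CX_def CY_def ambient_def)
  moreover have "replicate \<alpha> 0 \<in> CX C" "replicate \<beta> 0 \<in> CY C"
    using zero by (force simp: CX_def CY_def vzero_def)+
  moreover have "\<forall>u\<in>CX C. \<forall>v\<in>CX C. map2 (+) u v \<in> CX C" "\<forall>u\<in>CY C. \<forall>v\<in>CY C. map2 (+) u v \<in> CY C"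
    using add by (force simp: CX_def CY_def vadd_def)+
  moreover have "\<forall>u\<in>CX C. map uminus u \<in> CX C" "\<forall>u\<in>CY C. map uminus u \<in> CY C"
    using neg by (force simp: CX_def CY_def vneg_def)+
  ultimately show ?thesis by (simp add: lin_cyclic_def)
qed

lemma separable_cyclic_codeI:
  assumes "additive_code \<alpha> \<beta> C" "separable C" "lin_cyclic \<alpha> (CX C)" "lin_cyclic \<beta> (CY C)"
  shows "cyclic_code \<alpha> \<beta> C"
proof -
  have "pi_shift ` (CX C \<times> CY C) = shift ` CX C \<times> shift ` CY C"
    by (force simp: pi_shift_def)
  then have "pi_shift ` C = C"
    using assms(2-4) by (simp add: separable_def lin_cyclic_def)
  then show ?thesis using assms(1) by (simp add: cyclic_code_def)
qed

lemma map2_plus_replicate_zero: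
  "map2 (+) xs (replicate (length xs) 0) = (xs :: 'a::monoid_add list)"
  "map2 (+) (replicate (length xs) 0) xs = xs"
  by (induction xs) auto

lemma gen2_eq_Times:
  assumes \<alpha>: "\<alpha> \<ge> 1" and \<beta>: "\<beta> \<ge> 1"
  shows "gen2 \<alpha> \<beta> (cyc_red \<alpha> b, replicate \<beta> 0) (replicate \<alpha> 0, cyc_red \<beta> a) =
    {cyc_red \<alpha> (p * b) | p. True} \<times> {cyc_red \<beta> (q * a) | q. True}"
proof -
  have "vadd (star \<alpha> \<beta> p (cyc_red \<alpha> b, replicate \<beta> 0)) (star \<alpha> \<beta> q (replicate \<alpha> 0, cyc_red \<beta> a)) =
      (cyc_red \<alpha> (red2_poly p * b), cyc_red \<beta> (q * a))" for p q
    using map2_plus_replicate_zero[of "cyc_red \<alpha> (red2_poly p * b)"]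
      map2_plus_replicate_zero[of "cyc_red \<beta> (q * a)"]
    by (simp add: star_def vadd_def cyc_red_mult_Poly_cyc_red[OF \<alpha>] cyc_red_mult_Poly_cyc_red[OF \<beta>]
        cyc_red_0[OF \<alpha>] cyc_red_0[OF \<beta>])
  then have "gen2 \<alpha> \<beta> (cyc_red \<alpha> b, replicate \<beta> 0) (replicate \<alpha> 0, cyc_red \<beta> a) =
      {(cyc_red \<alpha> (red2_poly p * b), cyc_red \<beta> (q * a)) | p q. True}"
    unfolding gen2_def by simp
  also have "\<dots> = {cyc_red \<alpha> (p * b) | p. True} \<times> {cyc_red \<beta> (q * a) | q. True}"
    by auto (metis red2_poly_lift2_poly, blast)
  finally show ?thesis .
qed

theorem mainTheorem2:
  fixes \<alpha> \<beta> :: nat and C :: "z2z4vec set"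
  assumes "\<alpha> \<ge> 1" and "odd \<beta>"
    and "additive_code \<alpha> \<beta> C" and "separable C"
  shows "(cyclic_code \<alpha> \<beta> C \<longleftrightarrow> lin_cyclic \<alpha> (CX C) \<and> lin_cyclic \<beta> (CY C)) \<and>
    (cyclic_code \<alpha> \<beta> C \<longrightarrow>
      (\<exists>(b :: 2 poly) (f :: 4 poly) h g.
          b dvd ([:0, 1:] ^ \<alpha> - 1) \<and> f * h * g = [:0, 1:] ^ \<beta> - 1 \<and>
          C = gen2 \<alpha> \<beta> (cyc_red \<alpha> b, replicate \<beta> 0)
                        (replicate \<alpha> 0, cyc_red \<beta> (f * h + 2 * f))))"
proof (intro conjI impI)
  show "cyclic_code \<alpha> \<beta> C \<longleftrightarrow> lin_cyclic \<alpha> (CX C) \<and> lin_cyclic \<beta> (CY C)"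
    using cyclic_code_imp_lin_cyclic separable_cyclic_codeI assms(3,4) by blast
next
  assume "cyclic_code \<alpha> \<beta> C"
  then have X: "lin_cyclic \<alpha> (CX C)" and Y: "lin_cyclic \<beta> (CY C)"
    using cyclic_code_imp_lin_cyclic by blast+
  obtain b where b: "b dvd xn_minus_1 \<alpha>" "CX C = {cyc_red \<alpha> (p * b) | p. True}"
    using lin_cyclic_Z2_generator[OF assms(1) X] by blast
  obtain f h g where fhg: "f * h * g = xn_minus_1 \<beta>" "CY C = {cyc_red \<beta> (q * (f * h + 2 * f)) | q. True}"
    using lin_cyclic_Z4_generator[OF assms(2) Y] by blast
  have "\<beta> \<ge> 1" using assms(2) by (cases \<beta>) auto
  then have "C = gen2 \<alpha> \<beta> (cyc_red \<alpha> b, replicate \<beta> 0) (replicate \<alpha> 0, cyc_red \<beta> (f * h + 2 * f))"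
    using assms(4) gen2_eq_Times[OF assms(1)] b(2) fhg(2) by (simp add: separable_def)
  then show "\<exists>(b :: 2 poly) (f :: 4 poly) h g.
      b dvd ([:0, 1:] ^ \<alpha> - 1) \<and> f * h * g = [:0, 1:] ^ \<beta> - 1 \<and>
      C = gen2 \<alpha> \<beta> (cyc_red \<alpha> b, replicate \<beta> 0) (replicate \<alpha> 0, cyc_red \<beta> (f * h + 2 * f))"
    using b(1) fhg(1) by blast
qed

end
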